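(* If $\Gamma;\Delta\vdash t:\rho$ in $\lambda\mu\mathrm{T}$, then $t\in\mathrm{SN}_A$, i.e. there is no infinite $\to_A$-reduction sequence starting from $t$.
   Context: The calculus $\lambda\mu\mathrm{T}$. Types: $\rho,\sigma,\tau ::= \mathbb{N} \mid \sigma\to\tau$. Over infinite sets of $\lambda$-variables $x,y,\dots$ and $\mu$-variables $\alpha,\beta,\gamma,\dots$, terms and commands are mutually defined by $t,r,s ::= x \mid \lambda x{:}\rho.r \mid t\,s \mid \mu\alpha{:}\rho.c \mid 0 \mid \mathsf{S}\,t \mid \mathsf{nrec}_\rho\ r\ s\ t$ and $c ::= [\alpha]t$ (type annotations often omitted). Terms are considered modulo renaming of bound variables; $t[x:=r]$ is capture-avoiding substitution. Numerals: $\underline{n} := \mathsf{S}^n 0$. Contexts: $E ::= \Box \mid E\,t \mid \mathsf{S}\,E \mid \mathsf{nrec}\ r\ s\ E$; $E[u]$ is the result of filling the hole with $u$. Structural substitution $t[\alpha:=\beta E]$ is defined homomorphically on all constructs (capture-avoiding for both kinds of variables) except $([\alpha]u)[\alpha:=\beta E] := [\beta]E[u[\alpha:=\beta E]]$ (and $([\gamma]u)[\alpha:=\beta E]:=[\gamma](u[\alpha:=\beta E])$ for $\gamma\neq\alpha$). Typing judgments $\Gamma;\Delta\vdash t:\rho$ and $\Gamma;\Delta\vdash c$ are generated by: (var) $x:\rho\in\Gamma \Rightarrow \Gamma;\Delta\vdash x:\rho$; (lambda) $\Gamma,x:\sigma;\Delta\vdash t:\tau \Rightarrow \Gamma;\Delta\vdash\lambda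 x{:}\sigma.t:\sigma\to\tau$; (app) $\Gamma;\Delta\vdash t:\sigma\to\tau$, $\Gamma;\Delta\vdash s:\sigma$ $\Rightarrow \Gamma;\Delta\vdash ts:\tau$; (zero) $\Gamma;\Delta\vdash 0:\mathbb{N}$; (suc) $\Gamma;\Delta\vdash t:\mathbb{N}\Rightarrow\Gamma;\Delta\vdash \mathsf{S}\,t:\mathbb{N}$; (nrec) $\Gamma;\Delta\vdash r:\rho$, $\Gamma;\Delta\vdash s:\mathbb{N}\to\rho\to\rho$, $\Gamma;\Delta\vdash t:\mathbb{N}$ $\Rightarrow \Gamma;\Delta\vdash\mathsf{nrec}_\rho\ r\ s\ t:\rho$; (activate) $\Gamma;\Delta,\alpha:\rho\vdash c\Rightarrow\Gamma;\Delta\vdash\mu\alpha{:}\rho.c:\rho$; (passivate) $\Gamma;\Delta\vdash t:\rho$, $\alpha:\rho\in\Delta$ $\Rightarrow \Gamma;\Delta\vdash[\alpha]t$. $\to_A$ is the compatible closure (on terms and commands) of the rules: $(\lambda x.t)r\to t[x:=r]$; $\mathsf{S}(\mu\alpha.c)\to\mu\alpha.c[\alpha:=\alpha(\mathsf{S}\,\Box)]$; $(\mu\alpha.c)s\to\mu\alpha.c[\alpha:=\alpha(\Box\,s)]$; $\mathsf{nrec}\ r\ s\ 0\to r$; $\mathsf{nrec}\ r\ s\ (\mathsf{S}\,\underline{n})\to s\ \underline{n}\ (\mathsf{nrec}\ r\ s\ \underline{n})$; $\mathsf{nrec}\ r\ s\ (\mu\alpha.c)\to\mu\alpha.c[\alpha:=\alpha(\mathsf{nrec}\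 r\ s\ \Box)]$. $\mathrm{SN}_A$ is the set of terms inductively defined by: $t\in\mathrm{SN}_A$ whenever every $t'$ with $t\to_A t'$ is in $\mathrm{SN}_A$. *)

theory Defs
  imports Main
begin

text \<open>The calculus lambda-mu-T, with de Bruijn indices for both kinds of variables
  (lambda-variables and mu-variables live in separate index spaces).
  This realises terms modulo renaming of bound variables.\<close>

datatype ty = Nat | Arr ty ty

datatype trm =
    TVar nat
  | TLam ty trm
  | TApp trm trm
  | TMu ty cmd
  | TZero
  | TSucc trm
  | TNrec ty trm trm trm
and cmd = Pass nat trm

primrec numeral_t :: "nat \<Rightarrow> trm" where
  "numeral_t 0 = TZero"
| "numeral_t (Suc n) = TSucc (numeral_t n)"

primrec liftL :: "nat \<Rightarrow> trm \<Rightarrow> trm" and liftLc :: "nat \<Rightarrow> cmd \<Rightarrow> cmd" where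
  "liftL k (TVar i) = (if i < k then TVar i else TVar (Suc i))"
| "liftL k (TLam \<sigma> t) = TLam \<sigma> (liftL (Suc k) t)"
| "liftL k (TApp t s) = TApp (liftL k t) (liftL k s)"
| "liftL k (TMu \<rho> c) = TMu \<rho> (liftLc k c)"
| "liftL k TZero = TZero"
| "liftL k (TSucc t) = TSucc (liftL k t)"
| "liftL k (TNrec \<rho> r s t) = TNrec \<rho> (liftL k r) (liftL k s) (liftL k t)"
| "liftLc k (Pass \<alpha> t) = Pass \<alpha> (liftL k t)"

primrec liftM :: "nat \<Rightarrow> trm \<Rightarrow> trm" and liftMc :: "nat \<Rightarrow> cmd \<Rightarrow> cmd" where
  "liftM k (TVar i) = TVar i"
| "liftM k (TLam \<sigma> t) = TLam \<sigma> (liftM k t)"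
| "liftM k (TApp t s) = TApp (liftM k t) (liftM k s)"
| "liftM k (TMu \<rho> c) = TMu \<rho> (liftMc (Suc k) c)"
| "liftM k TZero = TZero"
| "liftM k (TSucc t) = TSucc (liftM k t)"
| "liftM k (TNrec \<rho> r s t) = TNrec \<rho> (liftM k r) (liftM k s) (liftM k t)"
| "liftMc k (Pass \<alpha> t) = Pass (if \<alpha> < k then \<alpha> else Suc \<alpha>) (liftM k t)"

text \<open>Capture-avoiding substitution of s for lambda-variable k
  (free indices above k are decremented, as the binder disappears).\<close>
primrec substL :: "trm \<Rightarrow> nat \<Rightarrow> trm \<Rightarrow> trm" and substLc :: "cmd \<Rightarrow> nat \<Rightarrow> trm \<Rightarrow> cmd" where
  "substL (TVar i) k s = (if i < k then TVar i else if i = k then s else TVar (i - 1))"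
| "substL (TLam \<sigma> t) k s = TLam \<sigma> (substL t (Suc k) (liftL 0 s))"
| "substL (TApp t u) k s = TApp (substL t k s) (substL u k s)"
| "substL (TMu \<rho> c) k s = TMu \<rho> (substLc c k (liftM 0 s))"
| "substL TZero k s = TZero"
| "substL (TSucc t) k s = TSucc (substL t k s)"
| "substL (TNrec \<rho> r u t) k s = TNrec \<rho> (substL r k s) (substL u k s) (substL t k s)"
| "substLc (Pass \<alpha> t) k s = Pass \<alpha> (substL t k s)"

datatype ectx = Hole | EApp ectx trm | ESucc ectx | ENrec ty trm trm ectx

primrec fill :: "ectx \<Rightarrow> trm \<Rightarrow> trm" where
  "fill Hole u = u"
| "fill (EApp E t) u = TApp (fill E u) t"
| "fill (ESucc E) u = TSucc (fill E u)"
| "fill (ENrec \<rho> r s E) u = TNrec \<rho> r s (fill E u)"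

primrec liftLE :: "nat \<Rightarrow> ectx \<Rightarrow> ectx" where
  "liftLE k Hole = Hole"
| "liftLE k (EApp E t) = EApp (liftLE k E) (liftL k t)"
| "liftLE k (ESucc E) = ESucc (liftLE k E)"
| "liftLE k (ENrec \<rho> r s E) = ENrec \<rho> (liftL k r) (liftL k s) (liftLE k E)"

primrec liftME :: "nat \<Rightarrow> ectx \<Rightarrow> ectx" where
  "liftME k Hole = Hole"
| "liftME k (EApp E t) = EApp (liftME k E) (liftM k t)"
| "liftME k (ESucc E) = ESucc (liftME k E)"
| "liftME k (ENrec \<rho> r s E) = ENrec \<rho> (liftM k r) (liftM k s) (liftME k E)"

text \<open>Structural substitution t[alpha := alpha E]: every command [alpha]u
  becomes [alpha] E[u[alpha := alpha E]].\<close>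
primrec sst :: "nat \<Rightarrow> ectx \<Rightarrow> trm \<Rightarrow> trm" and sstc :: "nat \<Rightarrow> ectx \<Rightarrow> cmd \<Rightarrow> cmd" where
  "sst a E (TVar i) = TVar i"
| "sst a E (TLam \<sigma> t) = TLam \<sigma> (sst a (liftLE 0 E) t)"
| "sst a E (TApp t u) = TApp (sst a E t) (sst a E u)"
| "sst a E (TMu \<rho> c) = TMu \<rho> (sstc (Suc a) (liftME 0 E) c)"
| "sst a E TZero = TZero"
| "sst a E (TSucc t) = TSucc (sst a E t)"
| "sst a E (TNrec \<rho> r u t) = TNrec \<rho> (sst a E r) (sst a E u) (sst a E t)"
| "sstc a E (Pass \<beta> u) =
     (if \<beta> = a then Pass a (fill E (sst a E u)) else Pass \<beta> (sst a E u))"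

inductive hastype :: "ty list \<Rightarrow> ty list \<Rightarrow> trm \<Rightarrow> ty \<Rightarrow> bool"
  and hastypec :: "ty list \<Rightarrow> ty list \<Rightarrow> cmd \<Rightarrow> bool" where
  t_var: "x < length \<Gamma> \<Longrightarrow> \<Gamma> ! x = \<rho> \<Longrightarrow> hastype \<Gamma> \<Delta> (TVar x) \<rho>"
| t_lam: "hastype (\<sigma> # \<Gamma>) \<Delta> t \<tau> \<Longrightarrow> hastype \<Gamma> \<Delta> (TLam \<sigma> t) (Arr \<sigma> \<tau>)"
| t_app: "hastype \<Gamma> \<Delta> t (Arr \<sigma> \<tau>) \<Longrightarrow> hastype \<Gamma> \<Delta> s \<sigma> \<Longrightarrow> hastype \<Gamma> \<Delta> (TApp t s) \<tau>"
| t_zero: "hastype \<Gamma> \<Delta> TZero Nat"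
| t_suc: "hastype \<Gamma> \<Delta> t Nat \<Longrightarrow> hastype \<Gamma> \<Delta> (TSucc t) Nat"
| t_nrec: "hastype \<Gamma> \<Delta> r \<rho> \<Longrightarrow> hastype \<Gamma> \<Delta> s (Arr Nat (Arr \<rho> \<rho>)) \<Longrightarrow> hastype \<Gamma> \<Delta> t Nat
           \<Longrightarrow> hastype \<Gamma> \<Delta> (TNrec \<rho> r s t) \<rho>"
| t_act: "hastypec \<Gamma> (\<rho> # \<Delta>) c \<Longrightarrow> hastype \<Gamma> \<Delta> (TMu \<rho> c) \<rho>"
| t_pass: "hastype \<Gamma> \<Delta> t \<rho> \<Longrightarrow> \<alpha> < length \<Delta> \<Longrightarrow> \<Delta> ! \<alpha> = \<rho> \<Longrightarrow> hastypec \<Gamma> \<Delta> (Pass \<alpha> t)"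

inductive red :: "trm \<Rightarrow> trm \<Rightarrow> bool" and redc :: "cmd \<Rightarrow> cmd \<Rightarrow> bool" where
  r_beta: "red (TApp (TLam \<sigma> t) r) (substL t 0 r)"
| r_suc_mu: "red (TSucc (TMu \<rho> c)) (TMu \<rho> (sstc 0 (ESucc Hole) c))"
| r_app_mu: "red (TApp (TMu (Arr \<sigma> \<tau>) c) s) (TMu \<tau> (sstc 0 (EApp Hole (liftM 0 s)) c))"
| r_nrec_0: "red (TNrec \<rho> r s TZero) r"
| r_nrec_S: "red (TNrec \<rho> r s (TSucc (numeral_t n)))
               (TApp (TApp s (numeral_t n)) (TNrec \<rho> r s (numeral_t n)))"
| r_nrec_mu: "red (TNrec \<rho> r s (TMu \<sigma> c))
               (TMu \<rho> (sstc 0 (ENrec \<rho> (liftM 0 r) (liftM 0 s) Hole) c))"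
| c_lam: "red t t' \<Longrightarrow> red (TLam \<sigma> t) (TLam \<sigma> t')"
| c_app1: "red t t' \<Longrightarrow> red (TApp t s) (TApp t' s)"
| c_app2: "red s s' \<Longrightarrow> red (TApp t s) (TApp t s')"
| c_mu: "redc c c' \<Longrightarrow> red (TMu \<rho> c) (TMu \<rho> c')"
| c_suc: "red t t' \<Longrightarrow> red (TSucc t) (TSucc t')"
| c_nrec1: "red r r' \<Longrightarrow> red (TNrec \<rho> r s t) (TNrec \<rho> r' s t)"
| c_nrec2: "red s s' \<Longrightarrow> red (TNrec \<rho> r s t) (TNrec \<rho> r s' t)"
| c_nrec3: "red t t' \<Longrightarrow> red (TNrec \<rho> r s t) (TNrec \<rho> r s t')"
| c_pass: "red t t' \<Longrightarrow> redc (Pass \<alpha> t) (Pass \<alpha> t')"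

inductive SNA :: "trm \<Rightarrow> bool" where
  SNA_intro: "(\<And>t'. red t t' \<Longrightarrow> SNA t') \<Longrightarrow> SNA t"

end

theory Submission
  imports Defs
begin

(* Strong normalization of the typed lambda-mu-calculus with Goedel's recursor (lambda-mu-T),
   by a reducibility argument in which types are interpreted through evaluation contexts.

   For every type rho we define a set K rho of "good" contexts E (for N: those with every
   E[numeral] strongly normalizing; for sigma -> tau: the hole and the contexts E'[[] s] with
   E' good for tau and s reducible for sigma), and call a term reducible for rho, t : R rho,
   if E[t] is strongly normalizing for every good E.  Since the hole is always good,
   reducible terms are strongly normalizing. *)

section \<open>Evaluation contexts\<close>

text \<open>Composition of contexts, and the number of frames of a context (the measure used
  to absorb a mu-abstraction into its surrounding context frame by frame).\<close>

primrec ecomp :: "ectx \<Rightarrow> ectx \<Rightarrow> ectx" where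
  "ecomp Hole F = F"
| "ecomp (EApp E t) F = EApp (ecomp E F) t"
| "ecomp (ESucc E) F = ESucc (ecomp E F)"
| "ecomp (ENrec \<rho> r s E) F = ENrec \<rho> r s (ecomp E F)"

primrec elen :: "ectx \<Rightarrow> nat" where
  "elen Hole = 0"
| "elen (EApp E t) = Suc (elen E)"
| "elen (ESucc E) = Suc (elen E)"
| "elen (ENrec \<rho> r s E) = Suc (elen E)"

lemma fill_ecomp[simp]: "fill (ecomp E F) u = fill E (fill F u)"
  by (induction E) auto

lemma ecomp_Hole[simp]: "ecomp E Hole = E"
  by (induction E) auto

lemma elen_ecomp[simp]: "elen (ecomp E F) = elen E + elen F"
  by (induction E) auto

section \<open>Parallel substitution\<close>

definition upL :: "(nat \<Rightarrow> trm) \<Rightarrow> nat \<Rightarrow> trm" where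
  "upL \<sigma> i = (case i of 0 \<Rightarrow> TVar 0 | Suc j \<Rightarrow> liftL 0 (\<sigma> j))"

definition upg :: "(nat \<Rightarrow> nat) \<Rightarrow> nat \<Rightarrow> nat" where
  "upg g i = (case i of 0 \<Rightarrow> 0 | Suc j \<Rightarrow> Suc (g j))"

definition upE :: "(nat \<Rightarrow> ectx) \<Rightarrow> nat \<Rightarrow> ectx" where
  "upE \<tau> i = (case i of 0 \<Rightarrow> Hole | Suc j \<Rightarrow> liftME 0 (\<tau> j))"

lemma upL_simps[simp]: "upL \<sigma> 0 = TVar 0" "upL \<sigma> (Suc j) = liftL 0 (\<sigma> j)"
  by (auto simp: upL_def)

lemma upg_simps[simp]: "upg g 0 = 0" "upg g (Suc j) = Suc (g j)"
  by (auto simp: upg_def)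

lemma upE_simps[simp]: "upE \<tau> 0 = Hole" "upE \<tau> (Suc j) = liftME 0 (\<tau> j)"
  by (auto simp: upE_def)

primrec psubst :: "(nat \<Rightarrow> trm) \<Rightarrow> (nat \<Rightarrow> nat) \<Rightarrow> (nat \<Rightarrow> ectx) \<Rightarrow> trm \<Rightarrow> trm"
  and psubstc :: "(nat \<Rightarrow> trm) \<Rightarrow> (nat \<Rightarrow> nat) \<Rightarrow> (nat \<Rightarrow> ectx) \<Rightarrow> cmd \<Rightarrow> cmd" where
  "psubst \<sigma> g \<tau> (TVar i) = \<sigma> i"
| "psubst \<sigma> g \<tau> (TLam ty t) = TLam ty (psubst (upL \<sigma>) g (\<lambda>b. liftLE 0 (\<tau> b)) t)"
| "psubst \<sigma> g \<tau> (TApp t u) = TApp (psubst \<sigma> g \<tau> t) (psubst \<sigma> g \<tau> u)"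
| "psubst \<sigma> g \<tau> (TMu ty c) = TMu ty (psubstc (\<lambda>i. liftM 0 (\<sigma> i)) (upg g) (upE \<tau>) c)"
| "psubst \<sigma> g \<tau> TZero = TZero"
| "psubst \<sigma> g \<tau> (TSucc t) = TSucc (psubst \<sigma> g \<tau> t)"
| "psubst \<sigma> g \<tau> (TNrec ty r u t) = TNrec ty (psubst \<sigma> g \<tau> r) (psubst \<sigma> g \<tau> u) (psubst \<sigma> g \<tau> t)"
| "psubstc \<sigma> g \<tau> (Pass b u) = Pass (g b) (fill (\<tau> b) (psubst \<sigma> g \<tau> u))"

primrec psubstE :: "(nat \<Rightarrow> trm) \<Rightarrow> (nat \<Rightarrow> nat) \<Rightarrow> (nat \<Rightarrow> ectx) \<Rightarrow> ectx \<Rightarrow> ectx" where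
  "psubstE \<sigma> g \<tau> Hole = Hole"
| "psubstE \<sigma> g \<tau> (EApp E t) = EApp (psubstE \<sigma> g \<tau> E) (psubst \<sigma> g \<tau> t)"
| "psubstE \<sigma> g \<tau> (ESucc E) = ESucc (psubstE \<sigma> g \<tau> E)"
| "psubstE \<sigma> g \<tau> (ENrec \<rho> r s E) = ENrec \<rho> (psubst \<sigma> g \<tau> r) (psubst \<sigma> g \<tau> s) (psubstE \<sigma> g \<tau> E)"

lemma psubst_fill[simp]: "psubst \<sigma> g \<tau> (fill E u) = fill (psubstE \<sigma> g \<tau> E) (psubst \<sigma> g \<tau> u)"
  by (induction E) auto

lemma psubst_numeral[simp]: "psubst \<sigma> g \<tau> (numeral_t n) = numeral_t n"
  by (induction n) auto

abbreviation hole :: "nat \<Rightarrow> ectx" where "hole \<equiv> (\<lambda>_. Hole)"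

definition shift :: "nat \<Rightarrow> nat \<Rightarrow> nat" where "shift k b = (if b < k then b else Suc b)"
definition shiftL :: "nat \<Rightarrow> nat \<Rightarrow> trm" where "shiftL k i = TVar (shift k i)"
definition substL_at :: "nat \<Rightarrow> trm \<Rightarrow> nat \<Rightarrow> trm" where
  "substL_at k s i = (if i < k then TVar i else if i = k then s else TVar (i - 1))"
definition sst_at :: "nat \<Rightarrow> ectx \<Rightarrow> nat \<Rightarrow> ectx" where "sst_at a E b = (if b = a then E else Hole)"

lemma sst_at_simps[simp]: "sst_at a E a = E" "b \<noteq> a \<Longrightarrow> sst_at a E b = Hole"
  by (auto simp: sst_at_def)

lemma up_instances[simp]:
  "upL (shiftL k) = shiftL (Suc k)"  "(\<lambda>i. liftM 0 (shiftL k i)) = shiftL k"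
  "upL TVar = TVar"  "(\<lambda>i. liftM k (TVar i)) = TVar"  "upE hole = hole"
  "upg id = id"  "upg (\<lambda>x. x) = (\<lambda>x. x)"
  "upg (shift k) = shift (Suc k)"
  "upL (substL_at k s) = substL_at (Suc k) (liftL 0 s)"
  "(\<lambda>i. liftM 0 (substL_at k s i)) = substL_at k (liftM 0 s)"
  "upE (sst_at a E) = sst_at (Suc a) (liftME 0 E)"
  "(\<lambda>b. liftLE 0 (sst_at a E b)) = sst_at a (liftLE 0 E)"
  by (auto simp: fun_eq_iff shiftL_def shift_def substL_at_def sst_at_def upL_def upg_def upE_def
      split: nat.split)

text \<open>The identity substitution, in both forms (id and its eta-expansion) that
  simplification produces.\<close>

lemma psubst_ident[simp]: "psubst TVar (\<lambda>x. x) hole t = t" "psubstc TVar (\<lambda>x. x) hole c = c"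
  by (induction t and c) auto

lemma psubst_id[simp]: "psubst TVar id hole t = t" "psubstc TVar id hole c = c"
  by (simp_all add: id_def)

lemma liftL_psubst: "liftL k t = psubst (shiftL k) id hole t"
  and liftLc_psubstc: "liftLc k c = psubstc (shiftL k) id hole c"
proof (induction t and c arbitrary: k and k)
  case (TVar x) then show ?case by (simp add: shiftL_def shift_def)
qed auto

lemma liftM_psubst: "liftM k t = psubst TVar (shift k) hole t"
  and liftMc_psubstc: "liftMc k c = psubstc TVar (shift k) hole c"
  by (induction t and c arbitrary: k and k) (auto simp: shift_def)

lemma substL_psubst: "substL t k s = psubst (substL_at k s) id hole t"
  and substLc_psubstc: "substLc c k s = psubstc (substL_at k s) id hole c"
proof (induction t and c arbitrary: k s and k s)
  case (TVar x) then show ?case by (simp add: substL_at_def)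
qed auto

lemma sstc_psubstc: "sstc a E c = psubstc TVar id (sst_at a E) c"
  and sst_psubst: "sst a E t = psubst TVar id (sst_at a E) t"
  by (induction c and t arbitrary: a E and a E) auto

lemma liftLE_psubstE: "liftLE k E = psubstE (shiftL k) id hole E"
  by (induction E) (auto simp: liftL_psubst id_def)

lemma liftME_psubstE: "liftME k E = psubstE TVar (shift k) hole E"
  by (induction E) (auto simp: liftM_psubst)

lemma up_shift:
  "(\<lambda>i. upL \<sigma> (shift (Suc k) i)) = upL (\<lambda>i. \<sigma> (shift k i))"
  "(\<lambda>i. upg g (shift (Suc k) i)) = upg (\<lambda>i. g (shift k i))"
  "(\<lambda>i. upE \<tau> (shift (Suc k) i)) = upE (\<lambda>i. \<tau> (shift k i))"
  "(\<lambda>i. upL \<sigma> (shift 0 i)) = (\<lambda>i. liftL 0 (\<sigma> i))"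
  "(\<lambda>i. upg g (shift 0 i)) = (\<lambda>i. shift 0 (g i))"
  "(\<lambda>i. upE \<tau> (shift 0 i)) = (\<lambda>i. liftME 0 (\<tau> i))"
  by (auto simp: fun_eq_iff upL_def upg_def upE_def shift_def split: nat.split)

lemma psubst_liftL: "psubst \<sigma> g \<tau> (liftL k t) = psubst (\<lambda>i. \<sigma> (shift k i)) g \<tau> t"
  and psubstc_liftLc: "psubstc \<sigma> g \<tau> (liftLc k c) = psubstc (\<lambda>i. \<sigma> (shift k i)) g \<tau> c"
proof (induction t and c arbitrary: \<sigma> g \<tau> k and \<sigma> g \<tau> k)
  case (TVar x) then show ?case by (simp add: shift_def)
next
  case (TLam x1 t) then show ?case by (simp add: up_shift)
qed auto

lemma psubst_liftM: "psubst \<sigma> g \<tau> (liftM k t) = psubst \<sigma> (\<lambda>i. g (shift k i)) (\<lambda>i. \<tau> (shift k i)) t"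
  and psubstc_liftMc: "psubstc \<sigma> g \<tau> (liftMc k c) = psubstc \<sigma> (\<lambda>i. g (shift k i)) (\<lambda>i. \<tau> (shift k i)) c"
proof (induction t and c arbitrary: \<sigma> g \<tau> k and \<sigma> g \<tau> k)
  case (TMu x1 c) then show ?case by (simp add: up_shift)
next
  case (Pass b u) then show ?case by (simp add: shift_def)
qed auto

lemma psubstE_liftLE: "psubstE \<sigma> g \<tau> (liftLE k E) = psubstE (\<lambda>i. \<sigma> (shift k i)) g \<tau> E"
  by (induction E) (auto simp: psubst_liftL)

lemma psubstE_liftME: "psubstE \<sigma> g \<tau> (liftME k E) = psubstE \<sigma> (\<lambda>i. g (shift k i)) (\<lambda>i. \<tau> (shift k i)) E"
  by (induction E) (auto simp: psubst_liftM)

lemma liftL_liftL: "j \<le> k \<Longrightarrow> liftL (Suc k) (liftL j t) = liftL j (liftL k t)"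
  and liftLc_liftLc: "j \<le> k \<Longrightarrow> liftLc (Suc k) (liftLc j c) = liftLc j (liftLc k c)"
  by (induction t and c arbitrary: j k and j k) auto

lemma liftL_liftM: "liftL k (liftM j t) = liftM j (liftL k t)"
  and liftLc_liftMc: "liftLc k (liftMc j c) = liftMc j (liftLc k c)"
  by (induction t and c arbitrary: j k and j k) auto

lemma liftM_liftM: "j \<le> k \<Longrightarrow> liftM (Suc k) (liftM j t) = liftM j (liftM k t)"
  and liftMc_liftMc: "j \<le> k \<Longrightarrow> liftMc (Suc k) (liftMc j c) = liftMc j (liftMc k c)"
  by (induction t and c arbitrary: j k and j k) auto

lemma liftLE_liftLE: "j \<le> k \<Longrightarrow> liftLE (Suc k) (liftLE j E) = liftLE j (liftLE k E)"
  by (induction E) (auto simp: liftL_liftL)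

lemma liftLE_liftME: "liftLE k (liftME j E) = liftME j (liftLE k E)"
  by (induction E) (auto simp: liftL_liftM)

lemma liftME_liftME: "j \<le> k \<Longrightarrow> liftME (Suc k) (liftME j E) = liftME j (liftME k E)"
  by (induction E) (auto simp: liftM_liftM)

lemma liftL_fill[simp]: "liftL k (fill E u) = fill (liftLE k E) (liftL k u)"
  by (induction E) auto

lemma liftM_fill[simp]: "liftM k (fill E u) = fill (liftME k E) (liftM k u)"
  by (induction E) auto

lemma liftLE_ecomp[simp]: "liftLE k (ecomp E F) = ecomp (liftLE k E) (liftLE k F)"
  by (induction E) auto

lemma liftME_ecomp[simp]: "liftME k (ecomp E F) = ecomp (liftME k E) (liftME k F)"
  by (induction E) auto

lemma lift_up:
  "(\<lambda>i. liftL (Suc k) (upL \<sigma> i)) = upL (\<lambda>i. liftL k (\<sigma> i))"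
  "(\<lambda>i. liftLE k (upE \<tau> i)) = upE (\<lambda>i. liftLE k (\<tau> i))"
  "(\<lambda>i. liftM k (upL \<sigma> i)) = upL (\<lambda>i. liftM k (\<sigma> i))"
  "(\<lambda>i. liftME (Suc k) (upE \<tau> i)) = upE (\<lambda>i. liftME k (\<tau> i))"
  "(\<lambda>i. shift (Suc k) (upg g i)) = upg (\<lambda>i. shift k (g i))"
  by (auto simp: fun_eq_iff upL_def upE_def upg_def shift_def liftL_liftL liftLE_liftME
      liftL_liftM liftME_liftME split: nat.split)

lemma liftL_psubst_comm: "liftL k (psubst \<sigma> g \<tau> t) = psubst (\<lambda>i. liftL k (\<sigma> i)) g (\<lambda>b. liftLE k (\<tau> b)) t"
  and liftLc_psubstc_comm: "liftLc k (psubstc \<sigma> g \<tau> c) = psubstc (\<lambda>i. liftL k (\<sigma> i)) g (\<lambda>b. liftLE k (\<tau> b)) c"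
proof (induction t and c arbitrary: \<sigma> g \<tau> k and \<sigma> g \<tau> k)
  case (TLam x1 t) then show ?case by (simp add: lift_up liftLE_liftLE)
next
  case (TMu x1 c) then show ?case by (simp add: lift_up liftL_liftM)
qed auto

lemma liftM_psubst_comm: "liftM k (psubst \<sigma> g \<tau> t) = psubst (\<lambda>i. liftM k (\<sigma> i)) (\<lambda>b. shift k (g b)) (\<lambda>b. liftME k (\<tau> b)) t"
  and liftMc_psubstc_comm: "liftMc k (psubstc \<sigma> g \<tau> c) = psubstc (\<lambda>i. liftM k (\<sigma> i)) (\<lambda>b. shift k (g b)) (\<lambda>b. liftME k (\<tau> b)) c"
proof (induction t and c arbitrary: \<sigma> g \<tau> k and \<sigma> g \<tau> k)
  case (TLam x1 t) then show ?case by (simp add: lift_up liftLE_liftME)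
next
  case (TMu x1 c) then show ?case by (simp add: lift_up liftM_liftM)
next
  case (Pass b u) then show ?case by (simp add: shift_def)
qed auto

lemma liftLE_psubstE_comm: "liftLE k (psubstE \<sigma> g \<tau> E) = psubstE (\<lambda>i. liftL k (\<sigma> i)) g (\<lambda>b. liftLE k (\<tau> b)) E"
  by (induction E) (auto simp: liftL_psubst_comm)

lemma liftME_psubstE_comm: "liftME k (psubstE \<sigma> g \<tau> E) = psubstE (\<lambda>i. liftM k (\<sigma> i)) (\<lambda>b. shift k (g b)) (\<lambda>b. liftME k (\<tau> b)) E"
  by (induction E) (auto simp: liftM_psubst_comm)

lemma psubst_up_lift:
  "psubst (upL \<sigma>) g (\<lambda>b. liftLE 0 (\<tau> b)) (liftL 0 u) = liftL 0 (psubst \<sigma> g \<tau> u)"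
  "psubstE (upL \<sigma>) g (\<lambda>b. liftLE 0 (\<tau> b)) (liftLE 0 E) = liftLE 0 (psubstE \<sigma> g \<tau> E)"
  "psubst (\<lambda>i. liftM 0 (\<sigma> i)) (upg g) (upE \<tau>) (liftM 0 u) = liftM 0 (psubst \<sigma> g \<tau> u)"
  "psubstE (\<lambda>i. liftM 0 (\<sigma> i)) (upg g) (upE \<tau>) (liftME 0 E) = liftME 0 (psubstE \<sigma> g \<tau> E)"
  by (simp_all add: psubst_liftL liftL_psubst_comm psubstE_liftLE liftLE_psubstE_comm
      psubst_liftM liftM_psubst_comm psubstE_liftME liftME_psubstE_comm up_shift)

lemma psubst_psubst:
  "psubst \<sigma>1 g1 \<tau>1 (psubst \<sigma>2 g2 \<tau>2 t) = psubst (\<lambda>i. psubst \<sigma>1 g1 \<tau>1 (\<sigma>2 i)) (\<lambda>b. g1 (g2 b))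
     (\<lambda>b. ecomp (\<tau>1 (g2 b)) (psubstE \<sigma>1 g1 \<tau>1 (\<tau>2 b))) t"
  and psubstc_psubstc:
  "psubstc \<sigma>1 g1 \<tau>1 (psubstc \<sigma>2 g2 \<tau>2 c) = psubstc (\<lambda>i. psubst \<sigma>1 g1 \<tau>1 (\<sigma>2 i)) (\<lambda>b. g1 (g2 b))
     (\<lambda>b. ecomp (\<tau>1 (g2 b)) (psubstE \<sigma>1 g1 \<tau>1 (\<tau>2 b))) c"
proof (induction t and c arbitrary: \<sigma>1 g1 \<tau>1 \<sigma>2 g2 \<tau>2 and \<sigma>1 g1 \<tau>1 \<sigma>2 g2 \<tau>2)
  case (TLam x1 t)
  have "(\<lambda>i. psubst (upL \<sigma>1) g1 (\<lambda>b. liftLE 0 (\<tau>1 b)) (upL \<sigma>2 i)) = upL (\<lambda>i. psubst \<sigma>1 g1 \<tau>1 (\<sigma>2 i))"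
    by (auto simp: fun_eq_iff upL_def psubst_up_lift split: nat.split)
  with TLam show ?case by (simp add: psubst_up_lift)
next
  case (TMu x1 c)
  have "(\<lambda>b. ecomp (upE \<tau>1 (upg g2 b)) (psubstE (\<lambda>i. liftM 0 (\<sigma>1 i)) (upg g1) (upE \<tau>1) (upE \<tau>2 b)))
      = upE (\<lambda>b. ecomp (\<tau>1 (g2 b)) (psubstE \<sigma>1 g1 \<tau>1 (\<tau>2 b)))"
    by (auto simp: fun_eq_iff upE_def psubst_up_lift split: nat.split)
  moreover have "(\<lambda>b. upg g1 (upg g2 b)) = upg (\<lambda>b. g1 (g2 b))"
    by (auto simp: fun_eq_iff upg_def split: nat.split)
  ultimately show ?case using TMu by (simp add: psubst_up_lift)
qed auto

lemma psubstE_id[simp]: "psubstE TVar (\<lambda>x. x) hole E = E" "psubstE TVar id hole E = E"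
  by (induction E) (auto simp: id_def)

lemma shifted_away[simp]:
  "(\<lambda>i. substL_at 0 s (shift 0 i)) = TVar"  "(\<lambda>i. sst_at 0 X (shift 0 i)) = hole"
  by (auto simp: fun_eq_iff substL_at_def sst_at_def shift_def)

lemma psubst_sst_at_liftM[simp]:
  "psubst TVar id (sst_at 0 X) (liftM 0 u) = liftM 0 u"
  "psubstE TVar id (sst_at 0 X) (liftME 0 E) = liftME 0 E"
  unfolding psubst_liftM psubstE_liftME by (simp_all add: liftM_psubst liftME_psubstE)

lemma psubstE_sst_at_upE[simp]: "psubstE TVar id (sst_at 0 X) (upE \<tau> b) = upE \<tau> b"
  by (cases b) simp_all

lemma substL_psubst_up:
  "substL (psubst (upL \<sigma>) g (\<lambda>b. liftLE 0 (\<tau> b)) t) 0 s = psubst (case_nat s \<sigma>) g \<tau> t"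
proof -
  have "(\<lambda>i. psubst (substL_at 0 s) id hole (upL \<sigma> i)) = case_nat s \<sigma>"
    by (auto simp: fun_eq_iff psubst_liftL split: nat.split) (simp add: substL_at_def)
  then show ?thesis
    by (simp add: substL_psubst psubst_psubst psubstE_liftLE)
qed

lemma psubst_substL:
  "psubst \<sigma> g \<tau> (substL t 0 r) = psubst (case_nat (psubst \<sigma> g \<tau> r) \<sigma>) g \<tau> t"
proof -
  have "(\<lambda>i. psubst \<sigma> g \<tau> (substL_at 0 r i)) = case_nat (psubst \<sigma> g \<tau> r) \<sigma>"
    by (auto simp: fun_eq_iff substL_at_def split: nat.split)
  then show ?thesis
    by (simp add: substL_psubst psubst_psubst)
qed

lemma psubstc_sstc:
  "psubstc (\<lambda>i. liftM 0 (\<sigma> i)) (upg g) (upE \<tau>) (sstc 0 (liftME 0 F) c)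
   = sstc 0 (liftME 0 (psubstE \<sigma> g \<tau> F)) (psubstc (\<lambda>i. liftM 0 (\<sigma> i)) (upg g) (upE \<tau>) c)"
proof -
  have "(\<lambda>b. ecomp (upE \<tau> b) (psubstE (\<lambda>i. liftM 0 (\<sigma> i)) (upg g) (upE \<tau>) (sst_at 0 (liftME 0 F) b)))
      = (\<lambda>b. ecomp (sst_at 0 (liftME 0 (psubstE \<sigma> g \<tau> F)) (upg g b)) (upE \<tau> b))"
    (is "?l = ?r")
  proof
    fix b show "?l b = ?r b" by (cases b) (simp_all add: psubst_up_lift)
  qed
  then show ?thesis
    by (simp add: sstc_psubstc psubstc_psubstc)
qed

lemma sstc_sstc:
  "sstc 0 (liftME 0 E) (sstc 0 (liftME 0 F) c) = sstc 0 (liftME 0 (ecomp E F)) c"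
proof -
  have "(\<lambda>b. ecomp (sst_at 0 (liftME 0 E) b) (psubstE TVar id (sst_at 0 (liftME 0 E)) (sst_at 0 (liftME 0 F) b)))
      = sst_at 0 (liftME 0 (ecomp E F))"
    by (auto simp: fun_eq_iff sst_at_def)
  then show ?thesis
    by (simp add: sstc_psubstc psubstc_psubstc id_def)
qed

text \<open>The body of a mu-abstraction after a parallel substitution and a structural
  substitution for its bound variable, up to identifying mu-variables 0 and 1 again:
  it is the original body under the substitution extended by the new context.\<close>

lemma psubstc_mu_body:
  "psubstc TVar (case_nat 0 id) hole (sstc 0 (liftME 0 E) (psubstc (\<lambda>i. liftM 0 (\<sigma> i)) (upg g) (upE \<tau>) c))
   = psubstc \<sigma> (case_nat 0 g) (case_nat E \<tau>) c"
proof -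
  let ?merge = "case_nat 0 id :: nat \<Rightarrow> nat"
  have "(\<lambda>i. ?merge (shift 0 i)) = id"
    by (auto simp: fun_eq_iff shift_def)
  then have unlift: "psubst TVar ?merge hole (liftM 0 u) = u" "psubstE TVar ?merge hole (liftME 0 F) = F"
    for u F by (simp_all add: psubst_liftM psubstE_liftME)
  have assign: "(\<lambda>b. ecomp (sst_at 0 (liftME 0 E) (upg g b)) (upE \<tau> b))
      = case_nat (liftME 0 E) (\<lambda>j. liftME 0 (\<tau> j))"
    by (auto simp: fun_eq_iff split: nat.split)
  have "sstc 0 (liftME 0 E) (psubstc (\<lambda>i. liftM 0 (\<sigma> i)) (upg g) (upE \<tau>) c)
      = psubstc (\<lambda>i. liftM 0 (\<sigma> i)) (upg g) (case_nat (liftME 0 E) (\<lambda>j. liftME 0 (\<tau> j))) c"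
    by (simp add: sstc_psubstc psubstc_psubstc assign)
  moreover have "(\<lambda>b. ?merge (upg g b)) = case_nat 0 g"
    by (auto simp: fun_eq_iff split: nat.split)
  moreover have "(\<lambda>b. psubstE TVar ?merge hole (case_nat (liftME 0 E) (\<lambda>j. liftME 0 (\<tau> j)) b))
      = case_nat E \<tau>"
    by (auto simp: fun_eq_iff unlift split: nat.split)
  ultimately show ?thesis
    by (simp add: psubstc_psubstc unlift)
qed

section \<open>Reduction and substitution\<close>

lemma red_fill: "red u u' \<Longrightarrow> red (fill E u) (fill E u')"
  by (induction E) (auto intro: red_redc.intros)

inductive redE :: "ectx \<Rightarrow> ectx \<Rightarrow> bool" where
  e_app1: "redE E E' \<Longrightarrow> redE (EApp E t) (EApp E' t)"
| e_app2: "red t t' \<Longrightarrow> redE (EApp E t) (EApp E t')"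
| e_suc: "redE E E' \<Longrightarrow> redE (ESucc E) (ESucc E')"
| e_nrec1: "red r r' \<Longrightarrow> redE (ENrec \<rho> r s E) (ENrec \<rho> r' s E)"
| e_nrec2: "red s s' \<Longrightarrow> redE (ENrec \<rho> r s E) (ENrec \<rho> r s' E)"
| e_nrec3: "redE E E' \<Longrightarrow> redE (ENrec \<rho> r s E) (ENrec \<rho> r s E')"

lemma redE_fill: "redE E E' \<Longrightarrow> red (fill E u) (fill E' u)"
  by (induction rule: redE.induct) (auto intro: red_redc.intros)

lemma redE_ecomp: "redE E E' \<Longrightarrow> redE (ecomp E F) (ecomp E' F)"
  by (induction rule: redE.induct) (auto intro: redE.intros)

lemma redE_elen: "redE E E' \<Longrightarrow> elen E' = elen E"
  by (induction rule: redE.induct) auto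

lemma red_psubst: "red t t' \<Longrightarrow> red (psubst \<sigma> g \<tau> t) (psubst \<sigma> g \<tau> t')"
  and redc_psubstc: "redc c c' \<Longrightarrow> redc (psubstc \<sigma> g \<tau> c) (psubstc \<sigma> g \<tau> c')"
proof (induction arbitrary: \<sigma> g \<tau> and \<sigma> g \<tau> rule: red_redc.inducts)
  case (r_beta \<sigma>' t r)
  show ?case
    by (simp add: psubst_substL flip: substL_psubst_up) (rule red_redc.r_beta)
next
  case (r_suc_mu \<rho> c)
  show ?case
    using psubstc_sstc[of \<sigma> g \<tau> "ESucc Hole" c] by (simp add: red_redc.r_suc_mu)
next
  case (r_app_mu \<sigma>' \<tau>' c s)
  show ?case
    using psubstc_sstc[of \<sigma> g \<tau> "EApp Hole s" c] by (simp add: red_redc.r_app_mu)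
next
  case (r_nrec_mu \<rho> r s \<sigma>' c)
  show ?case
    using psubstc_sstc[of \<sigma> g \<tau> "ENrec \<rho> r s Hole" c] by (simp add: red_redc.r_nrec_mu)
next
  case (r_nrec_S \<rho> r s n)
  show ?case
    using red_redc.r_nrec_S[of \<rho> "psubst \<sigma> g \<tau> r" "psubst \<sigma> g \<tau> s" n] by simp
next
  case (c_pass t t' \<alpha>)
  then show ?case by (simp add: red_fill red_redc.c_pass)
qed (auto intro: red_redc.intros)

lemma redE_psubstE: "redE E E' \<Longrightarrow> redE (psubstE \<sigma> g \<tau> E) (psubstE \<sigma> g \<tau> E')"
  by (induction rule: redE.induct) (auto intro: redE.intros red_psubst)

lemma red_lift: "red t t' \<Longrightarrow> red (liftL k t) (liftL k t')" "red t t' \<Longrightarrow> red (liftM k t) (liftM k t')"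
  by (simp_all add: liftL_psubst liftM_psubst red_psubst)

lemma redE_lift: "redE E E' \<Longrightarrow> redE (liftLE k E) (liftLE k E')" "redE E E' \<Longrightarrow> redE (liftME k E) (liftME k E')"
  by (simp_all add: liftLE_psubstE liftME_psubstE redE_psubstE)

lemma red_substL: "red t t' \<Longrightarrow> red (substL t k s) (substL t' k s)"
  by (simp add: substL_psubst red_psubst)

lemma redc_sstc: "redc c c' \<Longrightarrow> redc (sstc a E c) (sstc a E c')"
  by (simp add: sstc_psubstc redc_psubstc)

lemma rtranclp_map:
  assumes "\<And>x y. r x y \<Longrightarrow> q (f x) (f y)" and "r\<^sup>*\<^sup>* a b"
  shows "q\<^sup>*\<^sup>* (f a) (f b)"
  using assms(2) by induction (auto intro: assms(1) rtranclp.rtrancl_into_rtrancl)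

lemma star_congs:
  "red\<^sup>*\<^sup>* t t' \<Longrightarrow> red\<^sup>*\<^sup>* (TLam ty t) (TLam ty t')"
  "red\<^sup>*\<^sup>* t t' \<Longrightarrow> red\<^sup>*\<^sup>* s s' \<Longrightarrow> red\<^sup>*\<^sup>* (TApp t s) (TApp t' s')"
  "redc\<^sup>*\<^sup>* c c' \<Longrightarrow> red\<^sup>*\<^sup>* (TMu ty c) (TMu ty c')"
  "red\<^sup>*\<^sup>* t t' \<Longrightarrow> red\<^sup>*\<^sup>* (TSucc t) (TSucc t')"
  "red\<^sup>*\<^sup>* r r' \<Longrightarrow> red\<^sup>*\<^sup>* s s' \<Longrightarrow> red\<^sup>*\<^sup>* t t' \<Longrightarrow> red\<^sup>*\<^sup>* (TNrec ty r s t) (TNrec ty r' s' t')"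
  "red\<^sup>*\<^sup>* t t' \<Longrightarrow> redc\<^sup>*\<^sup>* (Pass b t) (Pass b t')"
  "red\<^sup>*\<^sup>* u u' \<Longrightarrow> redE\<^sup>*\<^sup>* E E' \<Longrightarrow> red\<^sup>*\<^sup>* (fill E u) (fill E' u')"
proof -
  have app: "red\<^sup>*\<^sup>* (TApp t s) (TApp t' s)" "red\<^sup>*\<^sup>* (TApp t' s) (TApp t' s')"
    if "red\<^sup>*\<^sup>* t t'" "red\<^sup>*\<^sup>* s s'" for t t' s s'
    using that by (auto intro: rtranclp_map[of red red] red_redc.intros)
  have nrec: "red\<^sup>*\<^sup>* (TNrec ty r s t) (TNrec ty r' s t)" "red\<^sup>*\<^sup>* (TNrec ty r' s t) (TNrec ty r' s' t)"
    "red\<^sup>*\<^sup>* (TNrec ty r' s' t) (TNrec ty r' s' t')"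
    if "red\<^sup>*\<^sup>* r r'" "red\<^sup>*\<^sup>* s s'" "red\<^sup>*\<^sup>* t t'" for r r' s s' t t'
    using that by (auto intro: rtranclp_map[of red red] red_redc.intros)
  have fill: "red\<^sup>*\<^sup>* (fill E u) (fill E u')" "red\<^sup>*\<^sup>* (fill E u') (fill E' u')"
    if "red\<^sup>*\<^sup>* u u'" "redE\<^sup>*\<^sup>* E E'" for u u' E E'
    using that by (auto intro: rtranclp_map[of red red] rtranclp_map[of redE red] red_fill redE_fill)
  show "red\<^sup>*\<^sup>* t t' \<Longrightarrow> red\<^sup>*\<^sup>* (TLam ty t) (TLam ty t')"
    "redc\<^sup>*\<^sup>* c c' \<Longrightarrow> red\<^sup>*\<^sup>* (TMu ty c) (TMu ty c')"
    "red\<^sup>*\<^sup>* t t' \<Longrightarrow> red\<^sup>*\<^sup>* (TSucc t) (TSucc t')"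
    "red\<^sup>*\<^sup>* t t' \<Longrightarrow> redc\<^sup>*\<^sup>* (Pass b t) (Pass b t')"
    by (auto intro: rtranclp_map red_redc.intros)
  show "red\<^sup>*\<^sup>* t t' \<Longrightarrow> red\<^sup>*\<^sup>* s s' \<Longrightarrow> red\<^sup>*\<^sup>* (TApp t s) (TApp t' s')"
    using app by (meson rtranclp_trans)
  show "red\<^sup>*\<^sup>* r r' \<Longrightarrow> red\<^sup>*\<^sup>* s s' \<Longrightarrow> red\<^sup>*\<^sup>* t t' \<Longrightarrow> red\<^sup>*\<^sup>* (TNrec ty r s t) (TNrec ty r' s' t')"
    using nrec by (meson rtranclp_trans)
  show "red\<^sup>*\<^sup>* u u' \<Longrightarrow> redE\<^sup>*\<^sup>* E E' \<Longrightarrow> red\<^sup>*\<^sup>* (fill E u) (fill E' u')"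
    using fill by (meson rtranclp_trans)
qed

lemma psubst_star:
  "(\<And>i. red\<^sup>*\<^sup>* (\<sigma> i) (\<sigma>' i)) \<Longrightarrow> (\<And>b. redE\<^sup>*\<^sup>* (\<tau> b) (\<tau>' b)) \<Longrightarrow> red\<^sup>*\<^sup>* (psubst \<sigma> g \<tau> t) (psubst \<sigma>' g \<tau>' t)"
  and psubstc_star:
  "(\<And>i. red\<^sup>*\<^sup>* (\<sigma> i) (\<sigma>' i)) \<Longrightarrow> (\<And>b. redE\<^sup>*\<^sup>* (\<tau> b) (\<tau>' b)) \<Longrightarrow> redc\<^sup>*\<^sup>* (psubstc \<sigma> g \<tau> c) (psubstc \<sigma>' g \<tau>' c)"
proof (induction t and c arbitrary: \<sigma> \<sigma>' g \<tau> \<tau>' and \<sigma> \<sigma>' g \<tau> \<tau>')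
  case (TLam ty t)
  have "red\<^sup>*\<^sup>* (upL \<sigma> i) (upL \<sigma>' i)" for i
    using TLam.prems(1) by (cases i) (auto intro: rtranclp_map red_lift)
  moreover have "redE\<^sup>*\<^sup>* (liftLE 0 (\<tau> b)) (liftLE 0 (\<tau>' b))" for b
    using TLam.prems(2) by (auto intro: rtranclp_map redE_lift)
  ultimately show ?case by (simp add: TLam.IH star_congs)
next
  case (TMu ty c)
  have "red\<^sup>*\<^sup>* (liftM 0 (\<sigma> i)) (liftM 0 (\<sigma>' i))" for i
    using TMu.prems(1) by (auto intro: rtranclp_map red_lift)
  moreover have "redE\<^sup>*\<^sup>* (upE \<tau> b) (upE \<tau>' b)" for b
    using TMu.prems(2) by (cases b) (auto intro: rtranclp_map redE_lift)
  ultimately show ?case by (simp add: TMu.IH star_congs)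
qed (simp_all add: star_congs)

lemma star_substL: "red s s' \<Longrightarrow> red\<^sup>*\<^sup>* (substL t k s) (substL t k s')"
  unfolding substL_psubst by (rule psubst_star) (auto simp: substL_at_def)

lemma sstc_star: "redE E E' \<Longrightarrow> redc\<^sup>*\<^sup>* (sstc 0 (liftME 0 E) c) (sstc 0 (liftME 0 E') c)"
  unfolding sstc_psubstc by (rule psubstc_star) (auto simp: sst_at_def intro: redE_lift)

section \<open>Strong normalization\<close>

text \<open>Kept as a constant of its own so that the
  simplifier never unfolds it; for terms it coincides with SN_A.\<close>

definition SN :: "('a \<Rightarrow> 'a \<Rightarrow> bool) \<Rightarrow> 'a \<Rightarrow> bool" where
  "SN r x \<longleftrightarrow> termip r x"

lemma SNI: "(\<And>y. r x y \<Longrightarrow> SN r y) \<Longrightarrow> SN r x"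
  unfolding SN_def by (rule accp.accI) simp

lemma SN_induct[consumes 1, case_names step]:
  assumes "SN r a" and step: "\<And>a. SN r a \<Longrightarrow> (\<And>a'. r a a' \<Longrightarrow> P a') \<Longrightarrow> P a"
  shows "P a"
  using assms(1) unfolding SN_def
proof (induction rule: accp.induct)
  case (accI a)
  show ?case
  proof (rule step)
    show "SN r a" unfolding SN_def using accI.hyps by (rule accp.accI)
    show "P a'" if "r a a'" for a'
      by (rule accI.IH) (simp add: that)
  qed
qed

lemma SN_steps: "SN r x \<Longrightarrow> r\<^sup>*\<^sup>* x y \<Longrightarrow> SN r y"
  unfolding SN_def by (erule accp_downwards) (simp add: rtranclp_conversep)

lemma SNA_SN: "SNA = SN red"
proof (intro ext iffI)
  show "SN red t" if "SNA t" for t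
    using that by induction (rule SNI)
  show "SNA t" if "SN red t" for t
    using that by (induction rule: SN_induct) (rule SNA.intros)
qed

lemma SN_reflect:
  assumes "SN q (f x)" and sim: "\<And>x y. r x y \<Longrightarrow> q (f x) (f y)"
  shows "SN r x"
proof -
  have "SN q z \<Longrightarrow> z = f x \<Longrightarrow> SN r x" for z x
  proof (induction z arbitrary: x rule: SN_induct)
    case (step z)
    show ?case
      by (rule SNI) (use step sim in blast)
  qed
  with assms(1) show ?thesis by blast
qed

lemma SN_lex_induct[consumes 2, case_names step]:
  assumes "SN r a" and "SN q b"
    and step: "\<And>a b. SN r a \<Longrightarrow> SN q b \<Longrightarrow>
      (\<And>a' b'. r a a' \<Longrightarrow> SN q b' \<Longrightarrow> P a' b') \<Longrightarrow> (\<And>b'. q b b' \<Longrightarrow> P a b') \<Longrightarrow> P a b"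
  shows "P a b"
  using assms(1,2)
proof (induction a arbitrary: b rule: SN_induct)
  case (step a)
  note outer = step
  from \<open>SN q b\<close> show ?case
  proof (induction b rule: SN_induct)
    case (step b)
    show ?case
      by (rule assms(3)[OF outer(1) step(1)]) (simp_all add: outer(2) step(2))
  qed
qed

lemma SN_Hole: "SN redE Hole"
  by (rule SNI) (auto elim: redE.cases)

lemma SN_Pass: "SN red u \<Longrightarrow> SN redc (Pass a u)"
proof (induction rule: SN_induct)
  case (step u)
  show ?case by (rule SNI) (use step(2) in \<open>auto elim: redc.cases\<close>)
qed

lemma SN_TLam: "SN red t \<Longrightarrow> SN red (TLam ty t)"
proof (induction rule: SN_induct)
  case (step t)
  show ?case by (rule SNI) (use step(2) in \<open>auto elim: red.cases\<close>)
qed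

section \<open>One-step reducts of a term in a context\<close>

lemma no_red_numeral: "\<not> red (numeral_t n) y"
proof (induction n arbitrary: y)
  case 0 then show ?case by (auto elim: red.cases)
next
  case (Suc n)
  show ?case
  proof
    assume "red (numeral_t (Suc n)) y"
    then have "red (TSucc (numeral_t n)) y" by simp
    then show False
    proof (cases rule: red.cases)
      case (r_suc_mu \<rho> c) then show ?thesis by (cases n) auto
    next
      case c_suc then show ?thesis using Suc.IH by auto
    qed
  qed
qed

lemma SN_numeral: "SN red (numeral_t n)"
  using no_red_numeral by (blast intro: SNI)

lemma no_red_TVar: "\<not> red (TVar i) v"
  by (auto elim: red.cases)

text \<open>Variables, applications and recursors are neutral: filled into a context they
  never create a redex with it.\<close>

definition neutral :: "trm \<Rightarrow> bool" where
  "neutral u = (case u of TVar _ \<Rightarrow> True | TApp _ _ \<Rightarrow> True | TNrec _ _ _ _ \<Rightarrow> True | _ \<Rightarrow> False)"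

lemma neutral_simps[simp]: "neutral (TApp a b)" "neutral (TNrec \<rho> a b d)" "neutral (TVar i)"
  by (auto simp: neutral_def)

lemma numeral_t_inj[simp]: "numeral_t a = numeral_t b \<longleftrightarrow> a = b"
  by (induction a arbitrary: b) (case_tac b; simp)+

lemma numeral_t_not_app_nrec[simp]:
  "TApp a b \<noteq> numeral_t n" "TNrec \<rho> r s t \<noteq> numeral_t n"
  by (cases n; simp)+

lemma fill_neutral_not_numeral: "neutral u \<Longrightarrow> fill E u \<noteq> numeral_t n"
proof (induction E arbitrary: n)
  case Hole then show ?case by (cases n; cases u) (auto simp: neutral_def)
next
  case (ESucc E) then show ?case by (cases n) auto
qed auto

lemma fill_mu_not_numeral: "fill E (TMu \<rho> c) \<noteq> numeral_t n"
proof (induction E arbitrary: n)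
  case Hole then show ?case by (cases n) auto
next
  case (ESucc E) then show ?case by (cases n) auto
qed auto

lemma red_fill_neutral:
  assumes "neutral u" and "red (fill E u) y"
  shows "(\<exists>E'. redE E E' \<and> y = fill E' u) \<or> (\<exists>u'. red u u' \<and> y = fill E u')"
  using assms(2)
proof (induction E arbitrary: y)
  case (EApp E t)
  from EApp.prems have "red (TApp (fill E u) t) y" by simp
  then show ?case
  proof (cases rule: red.cases)
    case c_app1
    then obtain t' where h: "y = TApp t' t" "red (fill E u) t'" by auto
    from EApp.IH[OF h(2)] h(1) show ?thesis by (auto intro: redE.intros)
  qed (use assms(1) in \<open>(cases E; auto simp: neutral_def intro: redE.intros)+\<close>)
next
  case (ESucc E)
  from ESucc.prems have "red (TSucc (fill E u)) y" by simp
  then show ?case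
  proof (cases rule: red.cases)
    case c_suc
    then obtain t' where h: "y = TSucc t'" "red (fill E u) t'" by auto
    from ESucc.IH[OF h(2)] h(1) show ?thesis by (auto intro: redE.intros)
  qed (use assms(1) in \<open>cases E; auto simp: neutral_def\<close>)
next
  case (ENrec \<rho> r s E)
  from ENrec.prems have "red (TNrec \<rho> r s (fill E u)) y" by simp
  then show ?case
  proof (cases rule: red.cases)
    case r_nrec_S
    then show ?thesis using fill_neutral_not_numeral[OF assms(1), of E] by (auto simp flip: numeral_t.simps)
  next
    case c_nrec3
    then obtain t' where h: "y = TNrec \<rho> r s t'" "red (fill E u) t'" by auto
    from ENrec.IH[OF h(2)] h(1) show ?thesis by (auto intro: redE.intros)
  qed (use assms(1) in \<open>(cases E; auto simp: neutral_def intro: redE.intros)+\<close>)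
qed simp

lemma red_fill_mu:
  assumes "red (fill E (TMu \<rho> c)) y"
  shows "(\<exists>E'. redE E E' \<and> y = fill E' (TMu \<rho> c)) \<or> (\<exists>c'. redc c c' \<and> y = fill E (TMu \<rho> c'))
   \<or> (\<exists>E1 F \<rho>'. E = ecomp E1 F \<and> elen F = 1 \<and> y = fill E1 (TMu \<rho>' (sstc 0 (liftME 0 F) c)))"
  using assms
proof (induction E arbitrary: y)
  case Hole then show ?case by (auto elim: red.cases)
next
  case (EApp E t)
  from EApp.prems have "red (TApp (fill E (TMu \<rho> c)) t) y" by simp
  then show ?case
  proof (cases rule: red.cases)
    case r_beta then show ?thesis by (cases E) auto
  next
    case r_app_mu
    then have "E = Hole" by (cases E) auto
    with r_app_mu show ?thesis
      by (intro disjI2) (rule exI[of _ Hole], rule exI[of _ "EApp Hole t"], auto)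
  next
    case c_app1
    then obtain t' where h: "y = TApp t' t" "red (fill E (TMu \<rho> c)) t'" by auto
    from EApp.IH[OF h(2)] h(1) show ?thesis
      by (auto intro: redE.intros) (metis ecomp.simps(2) fill.simps(2))
  next
    case c_app2
    then show ?thesis by (auto intro: redE.intros)
  qed
next
  case (ESucc E)
  from ESucc.prems have "red (TSucc (fill E (TMu \<rho> c))) y" by simp
  then show ?case
  proof (cases rule: red.cases)
    case r_suc_mu
    then have "E = Hole" by (cases E) auto
    with r_suc_mu show ?thesis
      by (intro disjI2) (rule exI[of _ Hole], rule exI[of _ "ESucc Hole"], auto)
  next
    case c_suc
    then obtain t' where h: "y = TSucc t'" "red (fill E (TMu \<rho> c)) t'" by auto
    from ESucc.IH[OF h(2)] h(1) show ?thesis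
      by (auto intro: redE.intros) (metis ecomp.simps(3) fill.simps(3))
  qed
next
  case (ENrec \<rho>0 r s E)
  from ENrec.prems have "red (TNrec \<rho>0 r s (fill E (TMu \<rho> c))) y" by simp
  then show ?case
  proof (cases rule: red.cases)
    case r_nrec_0 then show ?thesis by (cases E) auto
  next
    case r_nrec_S then show ?thesis using fill_mu_not_numeral[of E \<rho> c] by (auto simp flip: numeral_t.simps)
  next
    case r_nrec_mu
    then have "E = Hole" by (cases E) auto
    with r_nrec_mu show ?thesis
      by (intro disjI2) (rule exI[of _ Hole], rule exI[of _ "ENrec \<rho>0 r s Hole"], auto)
  next
    case c_nrec3
    then obtain t' where h: "y = TNrec \<rho>0 r s t'" "red (fill E (TMu \<rho> c)) t'" by auto
    from ENrec.IH[OF h(2)] h(1) show ?thesis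
      by (auto intro: redE.intros) (metis ecomp.simps(4) fill.simps(4))
  qed (auto intro: redE.intros)
qed

section \<open>Expansion lemmas\<close>

lemma SN_fill_var: "SN redE E \<Longrightarrow> SN red (fill E (TVar i))"
proof (induction rule: SN_induct)
  case (step E)
  show ?case
  proof (rule SNI)
    fix y assume "red (fill E (TVar i)) y"
    with red_fill_neutral[OF neutral_simps(3)] no_red_TVar obtain E' where "redE E E'" "y = fill E' (TVar i)"
      by blast
    with step(2) show "SN red y" by blast
  qed
qed

lemma SN_fill_var_app:
  assumes "SN red s" and "SN redE E"
  shows "SN red (fill E (TApp (TVar i) s))"
  using assms
proof (induction s E rule: SN_lex_induct)
  case (step s E)
  show ?case
  proof (rule SNI)
    fix y assume "red (fill E (TApp (TVar i) s)) y"
    from red_fill_neutral[OF neutral_simps(1) this] show "SN red y"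
    proof (elim disjE exE conjE)
      fix E' assume "redE E E'" "y = fill E' (TApp (TVar i) s)"
      with step(4) show ?thesis by blast
    next
      fix u' assume u': "red (TApp (TVar i) s) u'" "y = fill E u'"
      from u'(1) obtain s' where "red s s'" "y = fill E (TApp (TVar i) s')"
        using u'(2) no_red_TVar by (cases rule: red.cases) auto
      with step(2,3) show ?thesis by blast
    qed
  qed
qed

lemma SN_fill_beta:
  assumes "SN red s" and "SN red (fill E (substL t 0 s))"
  shows "SN red (fill E (TApp (TLam ty t) s))"
proof -
  have "\<forall>E t. X = fill E (substL t 0 s) \<longrightarrow> SN red (fill E (TApp (TLam ty t) s))"
    if "SN red s" and "SN red X" for X
    using that
  proof (induction s X rule: SN_lex_induct)
    case (step s X)
    show ?case
    proof (intro allI impI, rule SNI)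
      fix E t y assume X: "X = fill E (substL t 0 s)" and "red (fill E (TApp (TLam ty t) s)) y"
      from red_fill_neutral[OF neutral_simps(1) this(2)] show "SN red y"
      proof (elim disjE exE conjE)
        fix E' assume "redE E E'" and y: "y = fill E' (TApp (TLam ty t) s)"
        then have "red X (fill E' (substL t 0 s))" using X by (simp add: redE_fill)
        from step(4)[OF this] y show ?thesis by blast
      next
        fix u' assume u': "red (TApp (TLam ty t) s) u'" "y = fill E u'"
        from u'(1) show ?thesis
        proof (cases rule: red.cases)
          case r_beta
          then show ?thesis using u'(2) X step(2) by simp
        next
          case (c_app1 t1)
          from c_app1(2) obtain t' where t': "t1 = TLam ty t'" "red t t'" by (cases rule: red.cases) auto
          then have "red X (fill E (substL t' 0 s))" using X by (simp add: red_fill red_substL)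
          from step(4)[OF this] c_app1 t' u'(2) show ?thesis by blast
        next
          case (c_app2 s')
          have "red\<^sup>*\<^sup>* X (fill E (substL t 0 s'))"
            using X star_substL[OF c_app2(2)] by (simp add: star_congs)
          with step(2) have "SN red (fill E (substL t 0 s'))" by (rule SN_steps)
          from step(3)[OF c_app2(2) this] c_app2 u'(2) show ?thesis by blast
        qed
      qed
    qed
  qed
  with assms show ?thesis by blast
qed

lemma SN_fill_nrec_zero:
  assumes "SN red s" and "SN red (fill E r)"
  shows "SN red (fill E (TNrec \<rho> r s TZero))"
proof -
  have "\<forall>E r. X = fill E r \<longrightarrow> SN red (fill E (TNrec \<rho> r s TZero))"
    if "SN red s" and "SN red X" for X
    using that
  proof (induction s X rule: SN_lex_induct)
    case (step s X)
    show ?case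
    proof (intro allI impI, rule SNI)
      fix E r y assume X: "X = fill E r" and "red (fill E (TNrec \<rho> r s TZero)) y"
      from red_fill_neutral[OF neutral_simps(2) this(2)] show "SN red y"
      proof (elim disjE exE conjE)
        fix E' assume "redE E E'" and y: "y = fill E' (TNrec \<rho> r s TZero)"
        then have "red X (fill E' r)" using X by (simp add: redE_fill)
        from step(4)[OF this] y show ?thesis by blast
      next
        fix u' assume u': "red (TNrec \<rho> r s TZero) u'" "y = fill E u'"
        from u'(1) show ?thesis
        proof (cases rule: red.cases)
          case r_nrec_0
          then show ?thesis using u'(2) X step(2) by simp
        next
          case (c_nrec1 r')
          then have "red X (fill E r')" using X by (simp add: red_fill)
          from step(4)[OF this] c_nrec1 u'(2) show ?thesis by blast
        next
          case (c_nrec2 s')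
          from step(3)[OF c_nrec2(2) step(2)] c_nrec2 u'(2) X show ?thesis by blast
        next
          case c_nrec3
          then show ?thesis using no_red_numeral[of 0] by simp
        qed
      qed
    qed
  qed
  with assms show ?thesis by blast
qed

lemma SN_fill_nrec_succ:
  assumes "SN red s" and "SN red (fill E (TApp (TApp s (numeral_t n)) (TNrec \<rho> r s (numeral_t n))))"
  shows "SN red (fill E (TNrec \<rho> r s (TSucc (numeral_t n))))"
proof -
  let ?k = "\<lambda>r s. TApp (TApp s (numeral_t n)) (TNrec \<rho> r s (numeral_t n))"
  have "\<forall>E r. X = fill E (?k r s) \<longrightarrow> SN red (fill E (TNrec \<rho> r s (TSucc (numeral_t n))))"
    if "SN red s" and "SN red X" for X
    using that
  proof (induction s X rule: SN_lex_induct)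
    case (step s X)
    show ?case
    proof (intro allI impI, rule SNI)
      fix E r y assume X: "X = fill E (?k r s)" and "red (fill E (TNrec \<rho> r s (TSucc (numeral_t n)))) y"
      from red_fill_neutral[OF neutral_simps(2) this(2)] show "SN red y"
      proof (elim disjE exE conjE)
        fix E' assume "redE E E'" and y: "y = fill E' (TNrec \<rho> r s (TSucc (numeral_t n)))"
        then have "red X (fill E' (?k r s))" using X by (simp add: redE_fill)
        from step(4)[OF this] y show ?thesis by blast
      next
        fix u' assume u': "red (TNrec \<rho> r s (TSucc (numeral_t n))) u'" "y = fill E u'"
        from u'(1) show ?thesis
        proof (cases rule: red.cases)
          case r_nrec_S
          then show ?thesis using u'(2) X step(2) by simp
        next
          case (c_nrec1 r')
          then have "red X (fill E (?k r' s))"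
            using X by (auto intro: red_fill red_redc.intros)
          from step(4)[OF this] c_nrec1 u'(2) show ?thesis by blast
        next
          case (c_nrec2 s')
          then have "red\<^sup>*\<^sup>* (?k r s) (?k r s')"
            by (auto intro!: star_congs)
          then have "red\<^sup>*\<^sup>* X (fill E (?k r s'))"
            using X by (simp add: star_congs)
          with step(2) have "SN red (fill E (?k r s'))" by (rule SN_steps)
          from step(3)[OF c_nrec2(2) this] c_nrec2 u'(2) show ?thesis by blast
        next
          case c_nrec3
          then show ?thesis using no_red_numeral[of "Suc n"] by simp
        qed
      qed
    qed
  qed
  with assms show ?thesis by blast
qed

text \<open>The proof is by induction on the length of E, since absorbing a frame
  of E into the mu-abstraction shortens the context; this lemma is the induction step.\<close>

lemma SN_fill_mu_step:
  assumes shorter: "\<And>E1 c \<rho>. elen E1 < n \<Longrightarrow> SN redE E1 \<Longrightarrow> SN redc (sstc 0 (liftME 0 E1) c)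
                     \<Longrightarrow> SN red (fill E1 (TMu \<rho> c))"
    and "SN redE E" and "SN redc X"
  shows "\<forall>c \<rho>. elen E = n \<longrightarrow> X = sstc 0 (liftME 0 E) c \<longrightarrow> SN red (fill E (TMu \<rho> c))"
  using assms(2,3)
proof (induction E X rule: SN_lex_induct)
  case (step E X)
  show ?case
  proof (intro allI impI, rule SNI)
    fix c \<rho> y assume n: "elen E = n" and X: "X = sstc 0 (liftME 0 E) c"
      and "red (fill E (TMu \<rho> c)) y"
    from red_fill_mu[OF this(3)] show "SN red y"
    proof (elim disjE exE conjE)
      fix E' assume E': "redE E E'" "y = fill E' (TMu \<rho> c)"
      have "SN redc (sstc 0 (liftME 0 E') c)"
        using step(2) X sstc_star[OF E'(1)] by (simp add: SN_steps)
      moreover have "elen E' = n" using redE_elen[OF E'(1)] n by simp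
      ultimately show ?thesis using step(3)[OF E'(1)] E'(2) by blast
    next
      fix c' assume "redc c c'" and y: "y = fill E (TMu \<rho> c')"
      then have "redc X (sstc 0 (liftME 0 E) c')" using X by (simp add: redc_sstc)
      from step(4)[OF this] y n show ?thesis by blast
    next
      fix E1 F \<rho>' assume E: "E = ecomp E1 F" "elen F = 1"
        and y: "y = fill E1 (TMu \<rho>' (sstc 0 (liftME 0 F) c))"
      have "elen E1 < n" using E n by simp
      moreover have "SN redE E1"
        using step(1) E(1) by (auto intro: SN_reflect redE_ecomp)
      moreover have "SN redc (sstc 0 (liftME 0 E1) (sstc 0 (liftME 0 F) c))"
        using step(2) X E(1) by (simp add: sstc_sstc)
      ultimately show ?thesis using shorter y by blast
    qed
  qed
qed

lemma SN_fill_mu: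
  assumes "SN redE E" and "SN redc (sstc 0 (liftME 0 E) c)"
  shows "SN red (fill E (TMu \<rho> c))"
  using assms
proof (induction "elen E" arbitrary: E c \<rho> rule: less_induct)
  case less
  with SN_fill_mu_step[of "elen E"] show ?case by blast
qed

section \<open>Reducibility\<close>

primrec K :: "ty \<Rightarrow> ectx set" where
  "K Nat = {E. \<forall>n. SN red (fill E (numeral_t n))}"
| "K (Arr \<sigma> \<tau>) = insert Hole
     {ecomp E (EApp Hole s) | E s. E \<in> K \<tau> \<and> (\<forall>E'\<in>K \<sigma>. SN red (fill E' s))}"

definition R :: "ty \<Rightarrow> trm set" where
  "R \<rho> = {t. \<forall>E\<in>K \<rho>. SN red (fill E t)}"

lemma RI: "(\<And>E. E \<in> K \<rho> \<Longrightarrow> SN red (fill E t)) \<Longrightarrow> t \<in> R \<rho>"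
  by (simp add: R_def)

lemma RD: "t \<in> R \<rho> \<Longrightarrow> E \<in> K \<rho> \<Longrightarrow> SN red (fill E t)"
  by (simp add: R_def)

lemma K_arr: "E \<in> K \<tau> \<Longrightarrow> s \<in> R \<sigma> \<Longrightarrow> ecomp E (EApp Hole s) \<in> K (Arr \<sigma> \<tau>)"
  by (auto simp: R_def)

lemma K_arrE:
  assumes "E \<in> K (Arr \<sigma> \<tau>)" and "E \<noteq> Hole"
  obtains E1 s where "E = ecomp E1 (EApp Hole s)" "E1 \<in> K \<tau>" "s \<in> R \<sigma>"
  using assms by (auto simp: R_def)

lemma Hole_K: "Hole \<in> K \<rho>"
  by (cases \<rho>) (simp_all add: SN_numeral)

text \<open>Reducible terms are strongly normalizing, since the hole is a good context.\<close>

lemma R_SN: "t \<in> R \<rho> \<Longrightarrow> SN red t"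
  using RD[OF _ Hole_K] by fastforce

lemma SN_fill_ctx: "SN red (fill E u) \<Longrightarrow> SN redE E"
  by (erule SN_reflect) (rule redE_fill)

lemma K_SN: "E \<in> K \<rho> \<Longrightarrow> SN redE E"
proof (induction \<rho> arbitrary: E)
  case Nat
  then have "\<forall>n. SN red (fill E (numeral_t n))" by simp
  then have "SN red (fill E (numeral_t 0))" by blast
  then show ?case by (rule SN_fill_ctx)
next
  case (Arr \<sigma> \<tau>)
  show ?case
  proof (cases "E = Hole")
    case True
    show ?thesis unfolding True by (rule SN_Hole)
  next
    case False
    with Arr.prems obtain E1 s where E: "E = ecomp E1 (EApp Hole s)" "E1 \<in> K \<tau>" "s \<in> R \<sigma>"
      by (rule K_arrE)
    have "SN redE E1" using Arr.IH(2)[OF E(2)] .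
    with R_SN[OF E(3)] have "SN red (fill E1 (TApp (TVar 0) s))" by (rule SN_fill_var_app)
    then have "SN red (fill E (TVar 0))" using E(1) by simp
    then show ?thesis by (rule SN_fill_ctx)
  qed
qed

lemma var_R: "TVar i \<in> R \<rho>"
  by (auto intro!: RI SN_fill_var K_SN)

lemma app_R: "t \<in> R (Arr \<sigma> \<tau>) \<Longrightarrow> s \<in> R \<sigma> \<Longrightarrow> TApp t s \<in> R \<tau>"
  using RD[OF _ K_arr] by (auto intro!: RI)

lemma numeral_R: "numeral_t n \<in> R Nat"
  by (rule RI) simp

lemma succ_R: "t \<in> R Nat \<Longrightarrow> TSucc t \<in> R Nat"
proof (rule RI)
  fix E assume "t \<in> R Nat" and "E \<in> K Nat"
  then have "ecomp E (ESucc Hole) \<in> K Nat"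
    by (simp flip: numeral_t.simps)
  with \<open>t \<in> R Nat\<close> show "SN red (fill E (TSucc t))"
    using RD by fastforce
qed

lemma nrec_numeral_R:
  assumes r: "r \<in> R \<rho>" and s: "s \<in> R (Arr Nat (Arr \<rho> \<rho>))"
  shows "TNrec \<rho> r s (numeral_t n) \<in> R \<rho>"
proof (induction n)
  case 0
  show ?case
    using r SN_fill_nrec_zero[OF R_SN[OF s]] by (auto intro!: RI dest: RD)
next
  case (Suc n)
  have "TApp (TApp s (numeral_t n)) (TNrec \<rho> r s (numeral_t n)) \<in> R \<rho>"
    by (rule app_R[OF app_R[OF s numeral_R] Suc.IH])
  then show ?case
    using SN_fill_nrec_succ[OF R_SN[OF s]] by (auto intro!: RI dest: RD)
qed

lemma nrec_R:
  assumes "r \<in> R \<rho>" and "s \<in> R (Arr Nat (Arr \<rho> \<rho>))" and t: "t \<in> R Nat"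
  shows "TNrec \<rho> r s t \<in> R \<rho>"
proof (rule RI)
  fix E assume "E \<in> K \<rho>"
  then have "ecomp E (ENrec \<rho> r s Hole) \<in> K Nat"
    using nrec_numeral_R[OF assms(1,2)] by (auto intro: RD)
  from RD[OF t this] show "SN red (fill E (TNrec \<rho> r s t))" by simp
qed

lemma lam_R:
  assumes body: "\<And>s. s \<in> R \<sigma> \<Longrightarrow> substL t 0 s \<in> R \<tau>"
  shows "TLam \<sigma> t \<in> R (Arr \<sigma> \<tau>)"
proof (rule RI)
  fix E assume E: "E \<in> K (Arr \<sigma> \<tau>)"
  show "SN red (fill E (TLam \<sigma> t))"
  proof (cases "E = Hole")
    case True
    have "SN red (substL t 0 (TVar 0))" using body[OF var_R] by (rule R_SN)
    then have "SN red t" by (rule SN_reflect) (rule red_substL)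
    with True show ?thesis by (simp add: SN_TLam)
  next
    case False
    with E obtain E1 s where E1: "E = ecomp E1 (EApp Hole s)" "E1 \<in> K \<tau>" "s \<in> R \<sigma>"
      by (rule K_arrE)
    have "SN red (fill E1 (substL t 0 s))" using RD[OF body[OF E1(3)] E1(2)] .
    with E1(1) show ?thesis by (simp add: SN_fill_beta R_SN[OF E1(3)])
  qed
qed

lemma mu_R:
  assumes "\<And>E. E \<in> K \<rho> \<Longrightarrow> SN redc (sstc 0 (liftME 0 E) c)"
  shows "TMu \<rho> c \<in> R \<rho>"
  using assms by (auto intro!: RI SN_fill_mu K_SN)

lemma adequacy:
  "hastype \<Gamma> \<Delta> t \<rho> \<Longrightarrow> (\<forall>i<length \<Gamma>. \<sigma> i \<in> R (\<Gamma>!i)) \<Longrightarrow> (\<forall>b<length \<Delta>. \<tau> b \<in> K (\<Delta>!b))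
   \<Longrightarrow> psubst \<sigma> g \<tau> t \<in> R \<rho>"
  and adequacy_cmd:
  "hastypec \<Gamma> \<Delta> c \<Longrightarrow> (\<forall>i<length \<Gamma>. \<sigma> i \<in> R (\<Gamma>!i)) \<Longrightarrow> (\<forall>b<length \<Delta>. \<tau> b \<in> K (\<Delta>!b))
   \<Longrightarrow> SN redc (psubstc \<sigma> g \<tau> c)"
proof (induction arbitrary: \<sigma> g \<tau> and \<sigma> g \<tau> rule: hastype_hastypec.inducts)
  case (t_lam \<sigma>0 \<Gamma> \<Delta> t \<tau>0)
  show ?case
  proof (simp, rule lam_R)
    fix s assume "s \<in> R \<sigma>0"
    then have "\<forall>i<length (\<sigma>0 # \<Gamma>). case_nat s \<sigma> i \<in> R ((\<sigma>0 # \<Gamma>) ! i)"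
      using t_lam.prems(1) by (auto split: nat.split)
    from t_lam.IH[OF this t_lam.prems(2)]
    show "substL (psubst (upL \<sigma>) g (\<lambda>b. liftLE 0 (\<tau> b)) t) 0 s \<in> R \<tau>0"
      by (simp add: substL_psubst_up)
  qed
next
  case (t_app \<Gamma> \<Delta> t \<sigma>0 \<tau>0 s)
  then show ?case using app_R[OF t_app.IH(1)[OF t_app.prems] t_app.IH(2)[OF t_app.prems]] by simp
next
  case (t_zero \<Gamma> \<Delta>)
  then show ?case using numeral_R[of 0] by simp
next
  case (t_suc \<Gamma> \<Delta> t)
  then show ?case using succ_R by simp
next
  case (t_nrec \<Gamma> \<Delta> r \<rho> s t)
  then show ?case using nrec_R by simp
next
  case (t_act \<Gamma> \<rho> \<Delta> c)
  show ?case
  proof (simp, rule mu_R)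
    fix E assume "E \<in> K \<rho>"
    then have "\<forall>b<length (\<rho> # \<Delta>). case_nat E \<tau> b \<in> K ((\<rho> # \<Delta>) ! b)"
      using t_act.prems(2) by (auto split: nat.split)
    from t_act.IH[OF t_act.prems(1) this, of "case_nat 0 g"]
    have "SN redc (psubstc TVar (case_nat 0 id) hole
            (sstc 0 (liftME 0 E) (psubstc (\<lambda>i. liftM 0 (\<sigma> i)) (upg g) (upE \<tau>) c)))"
      by (simp only: psubstc_mu_body)
    then show "SN redc (sstc 0 (liftME 0 E) (psubstc (\<lambda>i. liftM 0 (\<sigma> i)) (upg g) (upE \<tau>) c))"
      by (rule SN_reflect) (rule redc_psubstc)
  qed
next
  case (t_pass \<Gamma> \<Delta> t \<rho> \<alpha>)
  then have "psubst \<sigma> g \<tau> t \<in> R \<rho>" and "\<tau> \<alpha> \<in> K \<rho>" by auto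
  then have "SN red (fill (\<tau> \<alpha>) (psubst \<sigma> g \<tau> t))" by (rule RD)
  then show ?case by (simp add: SN_Pass)
qed auto

theorem mainTheorem14:
  assumes "hastype \<Gamma> \<Delta> t \<rho>"
  shows "SNA t"
proof -
  have "psubst TVar id hole t \<in> R \<rho>"
    using adequacy[OF assms, where \<sigma> = TVar and g = id and \<tau> = hole] by (simp add: var_R Hole_K)
  then show ?thesis by (simp add: SNA_SN R_SN)
qed

end
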